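(* Let $I\subset G$ be a subgroup and $\mathrm{N}I=\sum_{g\in I}g\in\mathcal{O}[G]$. Then $\mathcal{O}[G]/(\mathrm{N}I)\cong R_\Psi$ with $\Psi=\{\psi\in\hat G:\psi(I)\neq1\}$; more precisely, the kernel of the canonical surjection $\mathcal{O}[G]\to R_\Psi$ is the ideal generated by $\mathrm{N}I$.
   Context: $G$ is a finite abelian group, $p$ an odd prime, and $\mathcal{O}$ a finite extension of $\mathbf{Z}_p$ containing all values of all characters $G\to\overline{\mathbf{Q}}_p^*$; $\hat G$ is the set of such characters. For a subset $\Psi\subset\hat G$, $R_\Psi$ denotes the image of the $\mathcal O$-algebra map $\mathcal{O}[G]\to\prod_{\psi\in\Psi}\mathcal{O}$, $x\mapsto(\psi(x))_{\psi\in\Psi}$. *)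

theory Defs
  imports "HOL-Algebra.Group" "HOL-Computational_Algebra.Primes"
begin

definition group_ring :: "('g, 'b) monoid_scheme \<Rightarrow> ('g \<Rightarrow> 'o::comm_ring_1) set" where
  "group_ring G = {x. \<forall>g. g \<notin> carrier G \<longrightarrow> x g = 0}"

definition gr_mult :: "('g, 'b) monoid_scheme \<Rightarrow> ('g \<Rightarrow> 'o::comm_ring_1) \<Rightarrow> ('g \<Rightarrow> 'o) \<Rightarrow> ('g \<Rightarrow> 'o)" where
  "gr_mult G x y = (\<lambda>g. if g \<in> carrier G
      then (\<Sum>h\<in>carrier G. x h * y (inv\<^bsub>G\<^esub> h \<otimes>\<^bsub>G\<^esub> g)) else 0)"

definition norm_elem :: "'g set \<Rightarrow> ('g \<Rightarrow> 'o::comm_ring_1)" where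
  "norm_elem I = (\<lambda>g. if g \<in> I then 1 else 0)"

text \<open>Principal ideal of O[G] generated by z (O[G] is commutative here).\<close>
definition gr_principal_ideal :: "('g, 'b) monoid_scheme \<Rightarrow> ('g \<Rightarrow> 'o::comm_ring_1) \<Rightarrow> ('g \<Rightarrow> 'o) set" where
  "gr_principal_ideal G z = {gr_mult G y z | y. y \<in> group_ring G}"

definition characters :: "('g, 'b) monoid_scheme \<Rightarrow> ('g \<Rightarrow> 'o::comm_ring_1) set" where
  "characters G = {\<psi>. \<psi> \<one>\<^bsub>G\<^esub> = 1 \<and>
      (\<forall>g\<in>carrier G. \<forall>h\<in>carrier G. \<psi> (g \<otimes>\<^bsub>G\<^esub> h) = \<psi> g * \<psi> h) \<and>
      (\<forall>g. g \<notin> carrier G \<longrightarrow> \<psi> g = 0)}"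

definition char_eval :: "('g, 'b) monoid_scheme \<Rightarrow> ('g \<Rightarrow> 'o::comm_ring_1) \<Rightarrow> ('g \<Rightarrow> 'o) \<Rightarrow> 'o" where
  "char_eval G \<psi> x = (\<Sum>g\<in>carrier G. x g * \<psi> g)"

text \<open>Kernel of the map O[G] \<rightarrow> prod_{psi in Psi} O, x \<mapsto> (psi(x))_psi.\<close>
definition char_kernel :: "('g, 'b) monoid_scheme \<Rightarrow> ('g \<Rightarrow> 'o::comm_ring_1) set \<Rightarrow> ('g \<Rightarrow> 'o) set" where
  "char_kernel G \<Psi> = {x \<in> group_ring G. \<forall>\<psi>\<in>\<Psi>. char_eval G \<psi> x = 0}"

definition group_exponent :: "('g, 'b) monoid_scheme \<Rightarrow> nat" where
  "group_exponent G = (LEAST n. 0 < n \<and> (\<forall>g\<in>carrier G. g [^]\<^bsub>G\<^esub> n = \<one>\<^bsub>G\<^esub>))"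

end

theory Submission
  imports Defs "HOL-Algebra.Left_Coset" "HOL-Algebra.FiniteProduct"
    "HOL-Number_Theory.Cong" "HOL-Computational_Algebra.Polynomial"
begin

(* Over a domain of characteristic 0 containing a primitive exp(G)-th root of unity, the
   characters separate the points of G: a homomorphism G -> Z/exp(G) that is nonzero at a given
   g <> 1 is defined on the cyclic group generated by g and extended to G one cyclic step at a time.
   Consequently the characters are finite in number, satisfy the orthogonality relations, and an
   element of O[G] is determined by its character values (Fourier inversion, using that the number
   of characters is nonzero in O).
   If x is killed by every psi that is nontrivial on I and h is in I, then h x - x is killed by every
   character, since for psi trivial on I its value is (psi h - 1) psi(x) = 0.  So x is constant on the
   cosets of I, i.e. a multiple of N I.  Conversely psi(N I) = 0 whenever psi is nontrivial on I. *)

(* Homomorphisms H -> Z/e, written additively with representatives in nat; composed with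
   k \<mapsto> \<zeta>^k for a primitive e-th root of unity \<zeta> they become characters. *)
definition log_character :: "('g, 'b) monoid_scheme \<Rightarrow> nat \<Rightarrow> 'g set \<Rightarrow> ('g \<Rightarrow> nat) \<Rightarrow> bool" where
  "log_character G e H l \<longleftrightarrow> (\<forall>x\<in>H. \<forall>y\<in>H. [l (x \<otimes>\<^bsub>G\<^esub> y) = l x + l y] (mod e))"

lemma gr_mult_in_group_ring: "gr_mult G x y \<in> group_ring G"
  by (simp add: group_ring_def gr_mult_def)

context group
begin

lemma subgroup_nat_pow_closed: "subgroup H G \<Longrightarrow> x \<in> H \<Longrightarrow> x [^] (n::nat) \<in> H"
  by (induction n) (auto simp: subgroup.m_closed subgroup.one_closed)

lemma log_character_one:
  assumes "subgroup H G" "log_character G e H l"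
  shows "[l \<one> = 0] (mod e)"
proof -
  have "[l \<one> + l \<one> = l \<one>] (mod e)"
    using assms subgroup.one_closed[OF assms(1)] unfolding log_character_def
    by (metis cong_sym l_one one_closed)
  then show ?thesis by (simp add: cong_add_lcancel_0_nat)
qed

lemma log_character_pow:
  assumes H: "subgroup H G" and l: "log_character G e H l" and x: "x \<in> H"
  shows "[l (x [^] n) = n * l x] (mod e)"
proof (induction n)
  case 0
  then show ?case using log_character_one[OF H l] by simp
next
  case (Suc n)
  have "[l (x [^] Suc n) = l (x [^] n) + l x] (mod e)"
    using l x subgroup_nat_pow_closed[OF H x] unfolding log_character_def by simp
  also have "[l (x [^] n) + l x = n * l x + l x] (mod e)"
    using Suc.IH by (rule cong_add) simp
  finally show ?case by (simp add: add.commute)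
qed

lemma obtain_pow_mem_subgroup_iff_dvd:
  assumes H: "subgroup H G" and a: "a \<in> carrier G" and n: "0 < (n::nat)" "a [^] n \<in> H"
  obtains m where "0 < m" "\<And>j::nat. a [^] j \<in> H \<longleftrightarrow> m dvd j"
proof
  define m :: nat where "m = (LEAST m. 0 < m \<and> a [^] m \<in> H)"
  have m: "0 < m" "a [^] m \<in> H" and least: "\<And>k. 0 < k \<Longrightarrow> k < m \<Longrightarrow> a [^] k \<notin> H"
    using LeastI[of "\<lambda>m. 0 < m \<and> a [^] m \<in> H", OF conjI[OF n]] not_less_Least m_def by auto
  show "0 < m" by (fact m(1))
  show "a [^] j \<in> H \<longleftrightarrow> m dvd j" for j
  proof
    assume aj: "a [^] j \<in> H"
    have "a [^] j = (a [^] m) [^] (j div m) \<otimes> a [^] (j mod m)"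
      using a by (simp add: nat_pow_pow nat_pow_mult)
    then have "a [^] (j mod m) = inv ((a [^] m) [^] (j div m)) \<otimes> a [^] j"
      using a by (simp add: inv_solve_left)
    also have "\<dots> \<in> H"
      using H aj m(2) by (simp add: subgroup.m_closed subgroup.m_inv_closed subgroup_nat_pow_closed)
    finally show "m dvd j" using least[of "j mod m"] m(1) by (auto simp: dvd_eq_mod_eq_0)
  next
    assume "m dvd j"
    then show "a [^] j \<in> H"
      using H m(2) a by (auto simp: nat_pow_pow[symmetric] subgroup_nat_pow_closed elim!: dvdE)
  qed
qed

lemma log_character_adjoin_well_defined:
  assumes H: "subgroup H G" and l: "log_character G e H l" and a: "a \<in> carrier G"
    and m: "\<And>j::nat. a [^] j \<in> H \<longleftrightarrow> m dvd j" and c: "[m * c = l (a [^] m)] (mod e)"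
    and h: "h1 \<in> H" "h2 \<in> H" and eq: "h1 \<otimes> a [^] (j1::nat) = h2 \<otimes> a [^] (j2::nat)"
  shows "[l h1 + j1 * c = l h2 + j2 * c] (mod e)"
proof -
  have ordered: "[l h1 + j1 * c = l h2 + j2 * c] (mod e)"
    if h: "h1 \<in> H" "h2 \<in> H" and eq: "h1 \<otimes> a [^] j1 = h2 \<otimes> a [^] j2" and "j1 \<le> j2"
    for h1 h2 and j1 j2 :: nat
  proof -
    obtain d where j2: "j2 = d + j1" using \<open>j1 \<le> j2\<close> le_iff_add by (metis add.commute)
    have hc: "h1 \<in> carrier G" "h2 \<in> carrier G" using h subgroup.mem_carrier[OF H] by auto
    have "h1 \<otimes> a [^] j1 = (h2 \<otimes> a [^] d) \<otimes> a [^] j1"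
      using eq a hc by (simp add: j2 nat_pow_mult m_assoc)
    then have h1: "h1 = h2 \<otimes> a [^] d" using a hc by simp
    then have "a [^] d = inv h2 \<otimes> h1" using a hc by (simp add: inv_solve_left)
    also have "\<dots> \<in> H" using H h by (simp add: subgroup.m_closed subgroup.m_inv_closed)
    finally have ad: "a [^] d \<in> H" .
    then obtain t where d: "d = m * t" using m by (auto elim: dvdE)
    have "[l h1 = l h2 + l (a [^] d)] (mod e)"
      using l h ad unfolding h1 log_character_def by blast
    also have "[l (a [^] d) = t * l (a [^] m)] (mod e)"
      using log_character_pow[OF H l m[THEN iffD2, of m]] a by (simp add: d nat_pow_pow mult.commute[of m])
    then have "[l h2 + l (a [^] d) = l h2 + t * (m * c)] (mod e)"
      using cong_scalar_left[OF cong_sym[OF c], of t] by (metis cong_add_lcancel_nat cong_trans)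
    finally have "[l h1 + j1 * c = l h2 + t * (m * c) + j1 * c] (mod e)" by (rule cong_add) simp
    then show ?thesis by (simp add: j2 d algebra_simps)
  qed
  show ?thesis
  proof (cases "j1 \<le> j2")
    case True
    then show ?thesis using ordered h eq by blast
  next
    case False
    then show ?thesis using ordered[OF h(2,1) eq[symmetric]] by (simp add: cong_sym)
  qed
qed

lemma character_one: "\<psi> \<in> characters G \<Longrightarrow> \<psi> \<one> = 1"
  and character_mult: "\<psi> \<in> characters G \<Longrightarrow> g \<in> carrier G \<Longrightarrow> h \<in> carrier G
      \<Longrightarrow> \<psi> (g \<otimes> h) = \<psi> g * \<psi> h"
  and character_outside: "\<psi> \<in> characters G \<Longrightarrow> g \<notin> carrier G \<Longrightarrow> \<psi> g = 0"
  unfolding characters_def by auto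

lemma character_pow: "\<psi> \<in> characters G \<Longrightarrow> g \<in> carrier G \<Longrightarrow> \<psi> (g [^] (n::nat)) = \<psi> g ^ n"
  by (induction n) (simp_all add: character_one character_mult)

lemma character_inv_mult: "\<psi> \<in> characters G \<Longrightarrow> g \<in> carrier G \<Longrightarrow> \<psi> (inv g) * \<psi> g = 1"
  by (metis character_mult character_one inv_closed l_inv)

lemma trivial_character: "(\<lambda>g. if g \<in> carrier G then 1 else 0) \<in> characters G"
  unfolding characters_def by auto

lemma character_times_closed:
  "\<psi> \<in> characters G \<Longrightarrow> \<chi> \<in> characters G \<Longrightarrow> (\<lambda>g. \<psi> g * \<chi> g) \<in> characters G"
  unfolding characters_def by (auto simp: algebra_simps)

lemma sum_characters_eq_0:
  fixes \<psi>\<^sub>0 :: "'a \<Rightarrow> 'o::idom"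
  assumes fin: "finite (characters G :: ('a \<Rightarrow> 'o) set)" and \<psi>\<^sub>0: "\<psi>\<^sub>0 \<in> characters G"
    and g: "g \<in> carrier G" "\<psi>\<^sub>0 g \<noteq> 1"
  shows "(\<Sum>\<psi>\<in>characters G. \<psi> g) = (0::'o)"
proof -
  let ?X = "characters G :: ('a \<Rightarrow> 'o) set"
  let ?f = "\<lambda>\<psi> g. \<psi>\<^sub>0 g * \<psi> g"
  have "inj_on ?f ?X"
  proof (rule inj_onI, rule ext)
    fix \<psi> \<chi> x
    assume "\<psi> \<in> ?X" "\<chi> \<in> ?X" "?f \<psi> = ?f \<chi>"
    then have eq: "\<psi>\<^sub>0 x * \<psi> x = \<psi>\<^sub>0 x * \<chi> x" by (simp add: fun_eq_iff)
    show "\<psi> x = \<chi> x"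
    proof (cases "x \<in> carrier G")
      case True
      then have "\<psi>\<^sub>0 x \<noteq> 0" using character_inv_mult[OF \<psi>\<^sub>0] by force
      then show ?thesis using eq by simp
    next
      case False
      then show ?thesis
        using character_outside[OF \<open>\<psi> \<in> ?X\<close>] character_outside[OF \<open>\<chi> \<in> ?X\<close>] by simp
    qed
  qed
  moreover have "?f ` ?X = ?X"
    using character_times_closed[OF \<psi>\<^sub>0] \<open>inj_on ?f ?X\<close> fin by (intro endo_inj_surj) auto
  ultimately have "(\<Sum>\<psi>\<in>?X. \<psi> g) = (\<Sum>\<psi>\<in>?X. \<psi>\<^sub>0 g * \<psi> g)"
    using sum.reindex_bij_betw[of ?f ?X ?X "\<lambda>\<psi>. \<psi> g"] by (simp add: bij_betw_def)
  also have "\<dots> = \<psi>\<^sub>0 g * (\<Sum>\<psi>\<in>?X. \<psi> g)" by (simp add: sum_distrib_left)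
  finally have "(1 - \<psi>\<^sub>0 g) * (\<Sum>\<psi>\<in>?X. \<psi> g) = 0" by (simp add: algebra_simps)
  then show ?thesis using g(2) by simp
qed

lemma sum_subgroup_translate:
  assumes I: "subgroup I G" and h: "h \<in> I"
  shows "(\<Sum>g\<in>I. f (h \<otimes> g)) = (\<Sum>g\<in>I. f g)"
proof -
  have hc: "h \<in> carrier G" using subgroup.mem_carrier[OF I h] .
  have "inj_on (\<lambda>g. h \<otimes> g) I" using inj_on_subset[OF inj_on_cmult[OF hc] subgroup.subset[OF I]] .
  moreover have "(\<lambda>g. h \<otimes> g) ` I = I"
    using coset_join3[OF hc I h] by (auto simp: l_coset_def)
  ultimately show ?thesis by (intro sum.reindex_bij_betw) (simp add: bij_betw_def)
qed

lemma char_eval_gr_mult: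
  assumes fin: "finite (carrier G)" and \<psi>: "\<psi> \<in> characters G"
  shows "char_eval G \<psi> (gr_mult G x z) = char_eval G \<psi> x * char_eval G \<psi> z"
proof -
  have "char_eval G \<psi> (gr_mult G x z) = (\<Sum>g\<in>carrier G. \<Sum>h\<in>carrier G. x h * z (inv h \<otimes> g) * \<psi> g)"
    unfolding char_eval_def gr_mult_def by (simp add: sum_distrib_right)
  also have "\<dots> = (\<Sum>h\<in>carrier G. \<Sum>g\<in>carrier G. x h * z (inv h \<otimes> g) * \<psi> g)"
    by (rule sum.swap)
  also have "\<dots> = (\<Sum>h\<in>carrier G. \<Sum>g\<in>carrier G. x h * \<psi> h * (z g * \<psi> g))"
  proof (rule sum.cong[OF refl])
    fix h
    assume h: "h \<in> carrier G"
    have "(\<Sum>g\<in>carrier G. x h * z (inv h \<otimes> g) * \<psi> g)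
        = (\<Sum>g\<in>carrier G. x h * z (inv h \<otimes> (h \<otimes> g)) * \<psi> (h \<otimes> g))"
      using sum_subgroup_translate[OF subgroup_self h, of "\<lambda>g. x h * z (inv h \<otimes> g) * \<psi> g"]
      by simp
    also have "\<dots> = (\<Sum>g\<in>carrier G. x h * \<psi> h * (z g * \<psi> g))"
      using h character_mult[OF \<psi> h] by (intro sum.cong) (simp_all add: m_assoc[symmetric])
    finally show "(\<Sum>g\<in>carrier G. x h * z (inv h \<otimes> g) * \<psi> g)
        = (\<Sum>g\<in>carrier G. x h * \<psi> h * (z g * \<psi> g))" .
  qed
  also have "\<dots> = char_eval G \<psi> x * char_eval G \<psi> z"
    by (simp add: char_eval_def sum_product)
  finally show ?thesis .
qed

lemma gr_mult_delta:
  assumes "finite (carrier G)" "h \<in> carrier G" "g \<in> carrier G"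
  shows "gr_mult G (\<lambda>k. if k = h then 1 else 0) x g = x (inv h \<otimes> g)"
  using assms by (simp add: gr_mult_def of_bool_def[symmetric] sum.delta')

lemma char_eval_delta:
  assumes "finite (carrier G)" "h \<in> carrier G"
  shows "char_eval G \<psi> (\<lambda>k. if k = h then 1 else 0) = \<psi> h"
  using assms by (simp add: char_eval_def of_bool_def[symmetric] sum.delta')

lemma char_eval_norm_elem:
  fixes \<psi> :: "'a \<Rightarrow> 'o::idom"
  assumes fin: "finite (carrier G)" and I: "subgroup I G" and \<psi>: "\<psi> \<in> characters G"
    and h: "h \<in> I" "\<psi> h \<noteq> 1"
  shows "char_eval G \<psi> (norm_elem I) = 0"
proof -
  have I_sub: "I \<subseteq> carrier G" using subgroup.subset[OF I] .
  have "char_eval G \<psi> (norm_elem I) = (\<Sum>g\<in>carrier G. if g \<in> I then \<psi> g else 0)"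
    unfolding char_eval_def norm_elem_def by (intro sum.cong) auto
  also have "\<dots> = (\<Sum>g\<in>I. \<psi> g)"
    using sum.inter_restrict[OF fin, of \<psi> I] I_sub by (simp add: Int_absorb1)
  finally have "char_eval G \<psi> (norm_elem I) = (\<Sum>g\<in>I. \<psi> g)" .
  moreover have "(\<Sum>g\<in>I. \<psi> g) = \<psi> h * (\<Sum>g\<in>I. \<psi> g)"
  proof -
    have "(\<Sum>g\<in>I. \<psi> g) = (\<Sum>g\<in>I. \<psi> (h \<otimes> g))" using sum_subgroup_translate[OF I h(1), of \<psi>] by simp
    also have "\<dots> = \<psi> h * (\<Sum>g\<in>I. \<psi> g)"
      using h(1) I_sub by (simp add: sum_distrib_left character_mult[OF \<psi>] subset_iff)
    finally show ?thesis .
  qed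
  ultimately show ?thesis using h(2) by (metis mult_cancel_right1 mult.commute)
qed

lemma gr_mult_norm_elem:
  assumes fin: "finite (carrier G)" and I: "subgroup I G" and g: "g \<in> carrier G"
  shows "gr_mult G y (norm_elem I) g = (\<Sum>h\<in>g <# I. y h)"
proof -
  have mem: "inv h \<otimes> g \<in> I \<longleftrightarrow> h \<in> g <# I" if h: "h \<in> carrier G" for h
  proof
    assume "inv h \<otimes> g \<in> I"
    then have "inv (inv h \<otimes> g) \<in> I" using I by (simp add: subgroup.m_inv_closed)
    then show "h \<in> g <# I" using subgroup.lcos_module_rev[OF I is_group g h] g h by (simp add: inv_mult_group)
  next
    assume "h \<in> g <# I"
    then have "inv g \<otimes> h \<in> I" using subgroup.lcos_module_imp[OF I is_group g] by blast
    then have "inv (inv g \<otimes> h) \<in> I" using I by (simp add: subgroup.m_inv_closed)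
    then show "inv h \<otimes> g \<in> I" using g h by (simp add: inv_mult_group)
  qed
  have "gr_mult G y (norm_elem I) g = (\<Sum>h\<in>carrier G. y h * (if inv h \<otimes> g \<in> I then 1 else 0))"
    using g by (simp add: gr_mult_def norm_elem_def)
  also have "\<dots> = (\<Sum>h\<in>carrier G. if h \<in> g <# I then y h else 0)"
    using mem by (intro sum.cong) auto
  also have "\<dots> = (\<Sum>h\<in>g <# I. y h)"
    using sum.inter_restrict[OF fin, of y "g <# I"] l_coset_subset_G[OF subgroup.subset[OF I] g]
    by (simp add: Int_absorb1)
  finally show ?thesis .
qed

lemma right_invariant_in_principal_ideal:
  assumes fin: "finite (carrier G)" and I: "subgroup I G" and x: "x \<in> group_ring G"
    and invariant: "\<And>g i. g \<in> carrier G \<Longrightarrow> i \<in> I \<Longrightarrow> x (g \<otimes> i) = x g"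
  shows "x \<in> gr_principal_ideal G (norm_elem I)"
proof -
  define rep where "rep g = (SOME r. r \<in> g <# I)" for g
  define y where "y h = (if h \<in> carrier G \<and> rep h = h then x h else 0)" for h
  have rep: "rep g \<in> g <# I" if "g \<in> carrier G" for g
    unfolding rep_def using lcos_self[OF that I] by (rule someI)
  have "x g = gr_mult G y (norm_elem I) g" for g
  proof (cases "g \<in> carrier G")
    case g: True
    have coset: "h \<in> carrier G \<and> rep h = rep g \<and> x h = x g" if "h \<in> g <# I" for h
      using that l_repr_independence[OF that g I] invariant[OF g] subgroup.elemlcos_carrier[OF I is_group g]
      by (auto simp: rep_def l_coset_def)
    have "gr_mult G y (norm_elem I) g = (\<Sum>h\<in>g <# I. if h = rep g then x g else 0)"
      unfolding gr_mult_norm_elem[OF fin I g] y_def using coset by (intro sum.cong) auto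
    also have "\<dots> = x g"
      using rep[OF g] finite_subset[OF l_coset_subset_G[OF subgroup.subset[OF I] g] fin] by simp
    finally show ?thesis by simp
  next
    case False
    then show ?thesis using x by (simp add: group_ring_def gr_mult_def)
  qed
  moreover have "y \<in> group_ring G" by (simp add: y_def group_ring_def)
  ultimately show ?thesis unfolding gr_principal_ideal_def by (auto simp: fun_eq_iff)
qed

end

locale finite_comm_group_exponent = comm_group +
  fixes e :: nat
  assumes finite_carrier: "finite (carrier G)"
    and exponent_pos: "0 < e"
    and pow_exponent: "x \<in> carrier G \<Longrightarrow> x [^] e = \<one>"
begin

lemma subgroup_powers:
  assumes a: "a \<in> carrier G"
  shows "subgroup (range (\<lambda>j::nat. a [^] j)) G"
proof (rule subgroupI)
  fix x y
  assume "x \<in> range (\<lambda>j::nat. a [^] j)" "y \<in> range (\<lambda>j::nat. a [^] j)"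
  then obtain i j :: nat where x: "x = a [^] i" and y: "y = a [^] j" by blast
  obtain e' where e: "e = Suc e'" using exponent_pos gr0_conv_Suc by blast
  have "i * e' + i = e * i" by (simp add: e)
  then have "a [^] (i * e') \<otimes> x = (a [^] e) [^] i"
    using a by (simp only: x nat_pow_mult nat_pow_pow)
  then have "inv x = a [^] (i * e')" using a x pow_exponent by (simp add: inv_equality)
  then show "inv x \<in> range (\<lambda>j::nat. a [^] j)" by blast
  show "x \<otimes> y \<in> range (\<lambda>j::nat. a [^] j)" using a by (simp add: x y nat_pow_mult)
qed (use a in auto)

lemma mem_adjoin_powers_iff:
  "g \<in> H <#> range (\<lambda>j::nat. a [^] j) \<longleftrightarrow> (\<exists>h\<in>H. \<exists>j::nat. g = h \<otimes> a [^] j)"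
  by (auto simp: set_mult_def)

lemma adjoin_powers_subgroup:
  assumes H: "subgroup H G" and a: "a \<in> carrier G"
  shows "subgroup (H <#> range (\<lambda>j::nat. a [^] j)) G"
    and "H \<subseteq> H <#> range (\<lambda>j::nat. a [^] j)"
    and "a \<in> H <#> range (\<lambda>j::nat. a [^] j)"
proof -
  show "subgroup (H <#> range (\<lambda>j::nat. a [^] j)) G"
    using mult_subgroups[OF H subgroup_powers[OF a]] .
  show "H \<subseteq> H <#> range (\<lambda>j::nat. a [^] j)"
  proof
    fix h
    assume "h \<in> H"
    moreover have "h = h \<otimes> a [^] (0::nat)" using \<open>h \<in> H\<close> subgroup.mem_carrier[OF H] by simp
    ultimately show "h \<in> H <#> range (\<lambda>j::nat. a [^] j)" unfolding mem_adjoin_powers_iff by blast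
  qed
  have "a = \<one> \<otimes> a [^] (1::nat)" using a by simp
  then show "a \<in> H <#> range (\<lambda>j::nat. a [^] j)"
    using subgroup.one_closed[OF H] unfolding mem_adjoin_powers_iff by blast
qed

lemma log_character_adjoin:
  assumes H: "subgroup H G" and l: "log_character G e H l" and a: "a \<in> carrier G"
    and m: "\<And>j::nat. a [^] j \<in> H \<longleftrightarrow> m dvd j" and c: "[m * c = l (a [^] m)] (mod e)"
  shows "\<exists>l'. log_character G e (H <#> range (\<lambda>j::nat. a [^] j)) l'
      \<and> (\<forall>h\<in>H. [l' h = l h] (mod e)) \<and> [l' a = c] (mod e)"
proof (intro exI conjI)
  define rep where "rep g = (SOME p :: 'a \<times> nat. fst p \<in> H \<and> g = fst p \<otimes> a [^] snd p)" for g
  define l' where "l' g = l (fst (rep g)) + snd (rep g) * c" for g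
  have l': "[l' (h \<otimes> a [^] j) = l h + j * c] (mod e)" if h: "h \<in> H" for h and j :: nat
  proof -
    let ?P = "\<lambda>p. fst p \<in> H \<and> h \<otimes> a [^] j = fst p \<otimes> a [^] snd p"
    have "?P (h, j)" using h by simp
    then have "?P (rep (h \<otimes> a [^] j))" unfolding rep_def by (rule someI)
    then show ?thesis
      unfolding l'_def using log_character_adjoin_well_defined[OF H l a m c _ h] by simp
  qed
  have hc: "h \<in> carrier G" if "h \<in> H" for h using that subgroup.mem_carrier[OF H] by blast
  show "log_character G e (H <#> range (\<lambda>j::nat. a [^] j)) l'"
    unfolding log_character_def
  proof (intro ballI)
    fix x y
    assume "x \<in> H <#> range (\<lambda>j::nat. a [^] j)" "y \<in> H <#> range (\<lambda>j::nat. a [^] j)"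
    then obtain h1 h2 and j1 j2 :: nat
      where h: "h1 \<in> H" "h2 \<in> H" and xy: "x = h1 \<otimes> a [^] j1" "y = h2 \<otimes> a [^] j2"
      unfolding mem_adjoin_powers_iff by blast
    have "h1 \<otimes> a [^] j1 \<otimes> (h2 \<otimes> a [^] j2) = (h1 \<otimes> h2) \<otimes> a [^] (j1 + j2)"
      using a hc h by (simp add: nat_pow_mult m_ac)
    moreover have "h1 \<otimes> h2 \<in> H" using H h by (simp add: subgroup.m_closed)
    ultimately have "[l' (h1 \<otimes> a [^] j1 \<otimes> (h2 \<otimes> a [^] j2)) = l (h1 \<otimes> h2) + (j1 + j2) * c] (mod e)"
      using l' by simp
    also have "[l (h1 \<otimes> h2) + (j1 + j2) * c = (l h1 + j1 * c) + (l h2 + j2 * c)] (mod e)"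
      using l h unfolding log_character_def
      by (metis (no_types) add_mult_distrib cong_add cong_refl add.assoc add.left_commute)
    also have "[(l h1 + j1 * c) + (l h2 + j2 * c) = l' (h1 \<otimes> a [^] j1) + l' (h2 \<otimes> a [^] j2)] (mod e)"
      using l' h by (intro cong_add) (simp_all add: cong_sym)
    finally show "[l' (x \<otimes> y) = l' x + l' y] (mod e)" by (simp only: xy)
  qed
  show "\<forall>h\<in>H. [l' h = l h] (mod e)"
    using l'[of _ 0] hc by simp
  have "[l' a = l \<one> + c] (mod e)"
    using l'[OF subgroup.one_closed[OF H], of 1] a by simp
  also have "[l \<one> + c = 0 + c] (mod e)"
    using log_character_one[OF H l] by (rule cong_add) simp
  finally show "[l' a = c] (mod e)" by simp
qed

lemma log_character_extend_step:
  assumes H: "subgroup H G" and l: "log_character G e H l" and a: "a \<in> carrier G"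
  shows "\<exists>l'. log_character G e (H <#> range (\<lambda>j::nat. a [^] j)) l' \<and> (\<forall>h\<in>H. [l' h = l h] (mod e))"
proof -
  obtain m where m: "0 < m" "\<And>j::nat. a [^] j \<in> H \<longleftrightarrow> m dvd j"
    using obtain_pow_mem_subgroup_iff_dvd[OF H a exponent_pos]
      pow_exponent[OF a] subgroup.one_closed[OF H] by auto
  then obtain q where e: "e = m * q"
    using pow_exponent[OF a] subgroup.one_closed[OF H] by (metis dvdE)
  \<comment> \<open>\<open>(a^m)^q = 1\<close> forces \<open>m\<close> to divide \<open>l (a^m)\<close>, so \<open>a\<close> can be sent to \<open>l (a^m) / m\<close>.\<close>
  have "[q * l (a [^] m) = l ((a [^] m) [^] q)] (mod e)"
    using log_character_pow[OF H l m(2)[THEN iffD2]] by (simp add: cong_sym)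
  also have "[l ((a [^] m) [^] q) = 0] (mod e)"
    using log_character_one[OF H l] a pow_exponent by (simp add: nat_pow_pow e)
  finally have "m * q dvd q * l (a [^] m)" by (simp add: cong_0_iff e)
  then have "m dvd l (a [^] m)" using e exponent_pos by (simp add: mult.commute)
  then have "[m * (l (a [^] m) div m) = l (a [^] m)] (mod e)" by simp
  then show ?thesis using log_character_adjoin[OF H l a m(2)] by blast
qed

lemma log_character_extend:
  assumes "subgroup H G" and "log_character G e H l"
  shows "\<exists>l'. log_character G e (carrier G) l' \<and> (\<forall>h\<in>H. [l' h = l h] (mod e))"
  using assms
proof (induction "card (carrier G) - card H" arbitrary: H l rule: less_induct)
  case less
  note H = less.prems(1) and l = less.prems(2)
  show ?case
  proof (cases "H = carrier G")
    case True
    then show ?thesis using l by (auto intro!: exI[of _ l])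
  next
    case False
    then obtain a where a: "a \<in> carrier G" "a \<notin> H" using subgroup.subset[OF H] by blast
    let ?H' = "H <#> range (\<lambda>j::nat. a [^] j)"
    obtain l' where l': "log_character G e ?H' l'" "\<forall>h\<in>H. [l' h = l h] (mod e)"
      using log_character_extend_step[OF H l a(1)] by blast
    note H' = adjoin_powers_subgroup[OF H a(1)]
    have "card H < card ?H'"
      using H' a(2) finite_subset[OF subgroup.subset[OF H'(1)] finite_carrier]
      by (intro psubset_card_mono) auto
    moreover have "card ?H' \<le> card (carrier G)"
      using subgroup.subset[OF H'(1)] finite_carrier by (rule card_mono[rotated])
    ultimately have "card (carrier G) - card ?H' < card (carrier G) - card H" by linarith
    then obtain l'' where l'': "log_character G e (carrier G) l''" "\<forall>h\<in>?H'. [l'' h = l' h] (mod e)"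
      using less.hyps[OF _ H'(1) l'(1)] by blast
    have "\<forall>h\<in>H. [l'' h = l h] (mod e)"
      using l''(2) l'(2) H'(2) by (blast intro: cong_trans)
    then show ?thesis using l''(1) by blast
  qed
qed

lemma log_character_nonzero:
  assumes g: "g \<in> carrier G" "g \<noteq> \<one>"
  shows "\<exists>l. log_character G e (carrier G) l \<and> \<not> [l g = 0] (mod e)"
proof -
  have l0: "log_character G e {\<one>} (\<lambda>_. 0)" unfolding log_character_def by simp
  obtain m where m: "0 < m" "\<And>j::nat. g [^] j \<in> {\<one>} \<longleftrightarrow> m dvd j"
    using obtain_pow_mem_subgroup_iff_dvd[OF triv_subgroup g(1) exponent_pos] pow_exponent[OF g(1)]
    by auto
  have "m \<noteq> 1" using m(2)[of 1] g by auto
  obtain c where e: "e = m * c" using m(2)[of e] pow_exponent[OF g(1)] by auto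
  then have c: "0 < c" "c < e" using exponent_pos m(1) \<open>m \<noteq> 1\<close> by auto
  let ?H' = "{\<one>} <#> range (\<lambda>j::nat. g [^] j)"
  have "[m * c = (\<lambda>_. 0) (g [^] m)] (mod e)" using e by (simp add: cong_0_iff)
  then obtain l' where l': "log_character G e ?H' l'" "[l' g = c] (mod e)"
    using log_character_adjoin[OF triv_subgroup l0 g(1) m(2)] by blast
  note H' = adjoin_powers_subgroup[OF triv_subgroup g(1)]
  obtain l where l: "log_character G e (carrier G) l" "[l g = l' g] (mod e)"
    using log_character_extend[OF H'(1) l'(1)] H'(3) by blast
  have "[l g = c] (mod e)" using l(2) l'(2) by (rule cong_trans)
  moreover have "\<not> [c = 0] (mod e)" using c by (simp add: cong_0_iff nat_dvd_not_less)
  ultimately have "\<not> [l g = 0] (mod e)" by (meson cong_sym cong_trans)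
  then show ?thesis using l(1) by blast
qed

lemma finite_characters: "finite (characters G :: ('a \<Rightarrow> 'o::idom) set)"
proof -
  let ?p = "monom 1 e - 1 :: 'o poly"
  have "coeff ?p e = 1" using exponent_pos by simp
  then have "?p \<noteq> 0" by (metis coeff_0 zero_neq_one)
  then have roots: "finite {z::'o. z ^ e = 1}"
    using poly_roots_finite[of ?p] by (simp add: poly_monom)
  have "\<psi> g ^ e = 1" if "\<psi> \<in> characters G" "g \<in> carrier G" for \<psi> :: "'a \<Rightarrow> 'o" and g
    using character_pow[OF that, of e] pow_exponent[OF that(2)] character_one[OF that(1)] by simp
  then have "characters G \<subseteq> {\<psi>. \<forall>g. (g \<in> carrier G \<longrightarrow> \<psi> g \<in> {z::'o. z ^ e = 1})
      \<and> (g \<notin> carrier G \<longrightarrow> \<psi> g = 0)}"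
    using character_outside by blast
  moreover have "finite {\<psi>. \<forall>g. (g \<in> carrier G \<longrightarrow> \<psi> g \<in> {z::'o. z ^ e = 1})
      \<and> (g \<notin> carrier G \<longrightarrow> \<psi> g = 0)}"
    using finite_set_of_finite_funs[OF finite_carrier roots] by simp
  ultimately show ?thesis by (rule finite_subset)
qed

end

locale primitive_root = finite_comm_group_exponent +
  fixes \<zeta> :: "'o::{idom, ring_char_0}"
  assumes zeta_pow_exponent: "\<zeta> ^ e = 1"
    and zeta_primitive: "\<And>k. 0 < k \<Longrightarrow> k < e \<Longrightarrow> \<zeta> ^ k \<noteq> 1"
begin

abbreviation Chars :: "('a \<Rightarrow> 'o) set" where "Chars \<equiv> characters G"

lemma zeta_pow_mod: "\<zeta> ^ n = \<zeta> ^ (n mod e)"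
proof -
  have "\<zeta> ^ n = (\<zeta> ^ e) ^ (n div e) * \<zeta> ^ (n mod e)"
    by (simp only: power_mult[symmetric] power_add[symmetric] mult_div_mod_eq)
  then show ?thesis by (simp add: zeta_pow_exponent)
qed

lemma zeta_pow_cong: "[m = n] (mod e) \<Longrightarrow> \<zeta> ^ m = \<zeta> ^ n"
  using zeta_pow_mod[of m] zeta_pow_mod[of n] by (simp add: cong_def)

lemma zeta_pow_eq_1_iff: "\<zeta> ^ n = 1 \<longleftrightarrow> [n = 0] (mod e)"
  using zeta_primitive[of "n mod e"] exponent_pos zeta_pow_mod[of n] by (auto simp: cong_def)

lemma character_of_log_character:
  assumes l: "log_character G e (carrier G) l"
  shows "(\<lambda>g. if g \<in> carrier G then \<zeta> ^ l g else 0) \<in> Chars"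
proof -
  have "\<zeta> ^ l \<one> = 1"
    using log_character_one[OF subgroup_self l] by (simp add: zeta_pow_eq_1_iff)
  moreover have "\<zeta> ^ l (g \<otimes> h) = \<zeta> ^ l g * \<zeta> ^ l h" if "g \<in> carrier G" "h \<in> carrier G" for g h
  proof -
    have "[l (g \<otimes> h) = l g + l h] (mod e)" using l that unfolding log_character_def by blast
    then show ?thesis by (simp add: zeta_pow_cong power_add)
  qed
  ultimately show ?thesis unfolding characters_def by auto
qed

lemma characters_separate:
  assumes "g \<in> carrier G" "g \<noteq> \<one>"
  shows "\<exists>\<psi>\<in>Chars. \<psi> g \<noteq> 1"
proof -
  obtain l where l: "log_character G e (carrier G) l" "\<not> [l g = 0] (mod e)"
    using log_character_nonzero[OF assms] by blast
  show ?thesis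
    by (rule bexI[OF _ character_of_log_character[OF l(1)]])
      (use l(2) assms(1) in \<open>simp add: zeta_pow_eq_1_iff\<close>)
qed

lemma sum_characters:
  assumes "g \<in> carrier G"
  shows "(\<Sum>\<psi>\<in>Chars. \<psi> g) = (if g = \<one> then of_nat (card Chars) else 0)"
  using characters_separate[OF assms] sum_characters_eq_0[OF finite_characters _ assms]
  by (auto simp: character_one)

lemma of_nat_card_characters_neq_0: "of_nat (card Chars) \<noteq> (0::'o)"
  using trivial_character finite_characters by (auto simp: card_eq_0_iff)

lemma char_eval_inversion:
  assumes g: "g \<in> carrier G"
  shows "(\<Sum>\<psi>\<in>Chars. \<psi> (inv g) * char_eval G \<psi> y) = of_nat (card Chars) * y g"
proof -
  have "(\<Sum>\<psi>\<in>Chars. \<psi> (inv g) * char_eval G \<psi> y)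
      = (\<Sum>\<psi>\<in>Chars. \<Sum>h\<in>carrier G. y h * \<psi> (inv g \<otimes> h))"
    unfolding char_eval_def using g
    by (intro sum.cong) (simp_all add: sum_distrib_left character_mult mult_ac)
  also have "\<dots> = (\<Sum>h\<in>carrier G. y h * (\<Sum>\<psi>\<in>Chars. \<psi> (inv g \<otimes> h)))"
    by (subst sum.swap) (simp add: sum_distrib_left)
  also have "\<dots> = (\<Sum>h\<in>carrier G. if h = g then y h * of_nat (card Chars) else 0)"
    using g by (intro sum.cong) (auto simp: sum_characters inv_solve_left')
  also have "\<dots> = of_nat (card Chars) * y g"
    using g finite_carrier by (simp add: mult.commute)
  finally show ?thesis .
qed

lemma eq_0_if_char_evals_eq_0:
  assumes "y \<in> group_ring G" "\<And>\<psi>. \<psi> \<in> Chars \<Longrightarrow> char_eval G \<psi> y = 0"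
  shows "y g = 0"
proof (cases "g \<in> carrier G")
  case True
  then show ?thesis
    using char_eval_inversion[OF True, of y] assms(2) of_nat_card_characters_neq_0 by simp
next
  case False
  then show ?thesis using assms(1) by (simp add: group_ring_def)
qed

lemma char_kernel_translation_invariant:
  assumes I: "subgroup I G" and x: "x \<in> char_kernel G {\<psi> \<in> Chars. \<exists>h\<in>I. \<psi> h \<noteq> 1}"
    and h: "h \<in> I" and g: "g \<in> carrier G"
  shows "x (inv h \<otimes> g) = x g"
proof -
  have hc: "h \<in> carrier G" using subgroup.mem_carrier[OF I h] .
  let ?\<delta> = "\<lambda>k. if k = h then 1 else 0"
  let ?y = "\<lambda>k. gr_mult G ?\<delta> x k - x k"
  have "?y \<in> group_ring G"
    using x gr_mult_in_group_ring[of G ?\<delta> x] by (simp add: char_kernel_def group_ring_def)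
  moreover have "char_eval G \<psi> ?y = 0" if \<psi>: "\<psi> \<in> Chars" for \<psi>
  proof -
    have "char_eval G \<psi> ?y = char_eval G \<psi> (gr_mult G ?\<delta> x) - char_eval G \<psi> x"
      by (simp add: char_eval_def sum_subtractf left_diff_distrib)
    also have "\<dots> = (\<psi> h - 1) * char_eval G \<psi> x"
      by (simp add: char_eval_gr_mult[OF finite_carrier \<psi>] char_eval_delta[OF finite_carrier hc]
          left_diff_distrib)
    finally have "char_eval G \<psi> ?y = (\<psi> h - 1) * char_eval G \<psi> x" .
    then show ?thesis using x h \<psi> by (cases "\<psi> h = 1") (auto simp: char_kernel_def)
  qed
  ultimately have "?y g = 0" by (rule eq_0_if_char_evals_eq_0[of ?y])
  then show ?thesis using gr_mult_delta[OF finite_carrier hc g, of x] by simp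
qed

lemma char_kernel_eq_principal_ideal:
  assumes I: "subgroup I G"
  shows "char_kernel G {\<psi> \<in> Chars. \<exists>h\<in>I. \<psi> h \<noteq> 1} = gr_principal_ideal G (norm_elem I)"
proof (intro equalityI subsetI)
  fix x :: "'a \<Rightarrow> 'o"
  assume x: "x \<in> char_kernel G {\<psi> \<in> Chars. \<exists>h\<in>I. \<psi> h \<noteq> 1}"
  have invariant: "x (g \<otimes> i) = x g" if "g \<in> carrier G" "i \<in> I" for g i
    using char_kernel_translation_invariant[OF I x subgroup.m_inv_closed[OF I \<open>i \<in> I\<close>] that(1)]
      subgroup.mem_carrier[OF I \<open>i \<in> I\<close>] that(1) by (simp add: m_comm)
  show "x \<in> gr_principal_ideal G (norm_elem I)"
    using right_invariant_in_principal_ideal[OF finite_carrier I _ invariant] x by (simp add: char_kernel_def)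
next
  fix x :: "'a \<Rightarrow> 'o"
  assume "x \<in> gr_principal_ideal G (norm_elem I)"
  then obtain y where x: "x = gr_mult G y (norm_elem I)" unfolding gr_principal_ideal_def by blast
  have "char_eval G \<psi> x = 0" if \<psi>: "\<psi> \<in> Chars" and h: "h \<in> I" "\<psi> h \<noteq> 1" for \<psi> h
    by (simp add: x char_eval_gr_mult[OF finite_carrier \<psi>] char_eval_norm_elem[OF finite_carrier I \<psi> h])
  then show "x \<in> char_kernel G {\<psi> \<in> Chars. \<exists>h\<in>I. \<psi> h \<noteq> 1}"
    by (auto simp: char_kernel_def x gr_mult_in_group_ring)
qed

end

lemma (in comm_group) group_exponent:
  assumes "finite (carrier G)"
  shows group_exponent_pos: "0 < group_exponent G"
    and pow_group_exponent: "g \<in> carrier G \<Longrightarrow> g [^] group_exponent G = \<one>"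
proof -
  have "0 < card (carrier G) \<and> (\<forall>g\<in>carrier G. g [^] card (carrier G) = \<one>)"
    using assms power_order_eq_one[OF assms] card_gt_0_iff by auto
  then have "0 < group_exponent G \<and> (\<forall>g\<in>carrier G. g [^] group_exponent G = \<one>)"
    unfolding group_exponent_def by (rule LeastI)
  then show "0 < group_exponent G" and "g \<in> carrier G \<Longrightarrow> g [^] group_exponent G = \<one>" by auto
qed

theorem lemma2p2:
  fixes G :: "('g, 'b) monoid_scheme" and I :: "'g set"
    and p :: nat
  assumes "comm_group G" and "finite (carrier G)"
    and "prime p" and "odd p"
    and "\<exists>\<zeta>::'o::{idom, ring_char_0}. \<zeta> ^ group_exponent G = 1 \<and>
           (\<forall>k. 0 < k \<and> k < group_exponent G \<longrightarrow> \<zeta> ^ k \<noteq> 1)"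
    and "subgroup I G"
  shows "char_kernel G {\<psi> \<in> characters G. \<exists>h\<in>I. \<psi> h \<noteq> (1::'o)}
           = gr_principal_ideal G (norm_elem I)"
proof -
  interpret comm_group G by fact
  obtain \<zeta> :: 'o where "\<zeta> ^ group_exponent G = 1"
    and "\<And>k. 0 < k \<Longrightarrow> k < group_exponent G \<Longrightarrow> \<zeta> ^ k \<noteq> 1"
    using assms(5) by blast
  then interpret primitive_root G "group_exponent G" \<zeta>
    using assms(2) group_exponent_pos pow_group_exponent by unfold_locales auto
  show ?thesis using char_kernel_eq_principal_ideal[OF assms(6)] .
qed

end
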